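(* Let $(Z_n)$ be a Galton–Watson process with offspring distribution $Z$ satisfying $Z\ge 1$ almost surely, let $W$ be a nonnegative weight distribution, and let $\Lambda_n$ be the minimum of the weights of the $Z_n$ edges entering generation $n$ (independent copies of $W$, independent of the process). Then $\Pr\{\sum_n\Lambda_n<\infty\}=1$ if and only if both (i) $\Pr\big\{\sum_n(\Pr\{W>1\})^{Z_n}<\infty\big\}=1$, and (ii) $\Pr\big\{\sum_n\int_0^1(\Pr\{W>t\})^{Z_n}\,dt<\infty\big\}=1$; otherwise $\Pr\{\sum_n\Lambda_n<\infty\}=0$.
   Context: $Z_n$ denotes the number of individuals in generation $n$ of the Galton–Watson process with offspring distribution $Z$ started from one individual; each edge from generation $n-1$ to generation $n$ of the Galton–Watson tree carries an independent weight distributed as $W$. *)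

theory Defs
  imports "HOL-Probability.Probability"
begin

text \<open>A sample point is a pair (xi, w): xi (n,i) is the number of children of the i-th
  individual of generation n (i.i.d. with the offspring law), and w (n,k) is the weight
  on the k-th edge entering generation n
  (i.i.d. with law W); all coordinates are independent (product measure).\<close>

definition gw_space :: "nat pmf \<Rightarrow> real measure \<Rightarrow> ((nat \<times> nat \<Rightarrow> nat) \<times> (nat \<times> nat \<Rightarrow> real)) measure" where
  "gw_space p W = (PiM UNIV (\<lambda>_. measure_pmf p)) \<Otimes>\<^sub>M (PiM UNIV (\<lambda>_. W))"

fun gw_gen :: "(nat \<times> nat \<Rightarrow> nat) \<Rightarrow> nat \<Rightarrow> nat" where
  "gw_gen xi 0 = 1"
| "gw_gen xi (Suc n) = (\<Sum>i<gw_gen xi n. xi (n, i))"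

definition gw_min_weight :: "((nat \<times> nat \<Rightarrow> nat) \<times> (nat \<times> nat \<Rightarrow> real)) \<Rightarrow> nat \<Rightarrow> real" where
  "gw_min_weight \<omega> n = Min ((\<lambda>k. snd \<omega> (n, k)) ` {..<gw_gen (fst \<omega>) n})"

end

theory Submission
  imports Defs
begin

text \<open>Fix generation sizes z_n \<ge> 1 and put Y_n = min \<Lambda>_n 1. By Fubini, E Y_n = g(z_n) with
  g(k) = \<integral>_0^1 P{W > t}^k dt. If \<Sum> g(z_n) < \<infinity>, then \<Sum> Y_n < \<infinity> a.s., so Y_n = \<Lambda>_n
  eventually. If \<Sum> g(z_n) = \<infinity>, the Y_n are independent and exp (-y) \<le> 1 - c y on [0,1] with
  c = 1 - exp (-1), so the Chernoff bound P{\<Sum>_{n<N} Y_n \<le> L} \<le> exp (L - c \<Sum>_{n<N} g(z_n))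
  tends to 0 and \<Sum> \<Lambda>_n = \<infinity> a.s. Hence P{\<Sum> \<Lambda>_n < \<infinity>} = P{\<Sum> g(Z_n) < \<infinity>}. As g is
  decreasing and Z_{n+k} dominates the process restarted from one individual of generation k, this
  event agrees a.s. with a tail event of the independent generations, so Kolmogorov's zero-one law
  applies. Finally P{W > 1}^k \<le> g(k), so (ii) implies (i).\<close>

lemma pred_summable [measurable]:
  fixes f :: "nat \<Rightarrow> 'a \<Rightarrow> real"
  assumes [measurable]: "\<And>n. f n \<in> borel_measurable M"
  shows "Measurable.pred M (\<lambda>x. summable (\<lambda>n. f n x))"
proof -
  have "(\<lambda>x. summable (\<lambda>n. f n x)) = (\<lambda>x. Cauchy (\<lambda>N. \<Sum>n<N. f n x))"
    by (simp add: summable_iff_convergent Cauchy_convergent_iff)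
  then show ?thesis by simp
qed

lemma nonneg_not_summable_unbounded:
  fixes g :: "nat \<Rightarrow> real"
  assumes "\<And>n. 0 \<le> g n" "\<not> summable g"
  obtains N where "B < (\<Sum>n<N. g n)"
proof -
  have "\<not> (\<forall>n. (\<Sum>k\<le>n. g k) \<le> B)"
    using bounded_imp_summable[of g B] assms by blast
  then obtain n where "B < (\<Sum>k\<le>n. g k)" by (auto simp: not_le)
  then show ?thesis by (intro that[of "Suc n"]) (simp add: lessThan_Suc_atMost)
qed

lemma exp_neg_le_chord:
  fixes y :: real
  assumes "0 \<le> y" "y \<le> 1"
  shows "exp (- y) \<le> 1 - (1 - exp (-1)) * y"
  using convex_onD[OF exp_convex, of y 0 "-1"] assms by (simp add: algebra_simps)

lemma borel_measurable_coordinate: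
  assumes "sets W = sets borel"
  shows "(\<lambda>w. w i) \<in> borel_measurable (PiM UNIV (\<lambda>_. W))"
  using measurable_component_singleton[of i UNIV "\<lambda>_. W"] assms
  by (simp cong: measurable_cong_sets)

lemma AE_PiM_nonneg:
  fixes W :: "real measure"
  assumes "prob_space W" and "AE x in W. 0 \<le> x"
  shows "AE w in PiM UNIV (\<lambda>_::'i::countable. W). \<forall>i. 0 \<le> w i"
  unfolding AE_all_countable by (intro allI AE_PiM_component) (use assms in auto)

lemma indep_vars_PiM_coordinates:
  assumes "prob_space M"
  shows "prob_space.indep_vars (PiM UNIV (\<lambda>_::'i. M)) (\<lambda>_. M) (\<lambda>i x. x i) UNIV"
proof -
  interpret prob_space "PiM UNIV (\<lambda>_::'i. M)" using assms by (intro prob_space_PiM) auto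
  have "distr (PiM UNIV (\<lambda>_::'i. M)) (PiM UNIV (\<lambda>_::'i. M)) (\<lambda>x. \<lambda>i\<in>UNIV. x i)
      = PiM UNIV (\<lambda>_::'i. M)"
    by (simp add: restrict_def distr_id2)
  also have "\<dots> = PiM UNIV (\<lambda>i. distr (PiM UNIV (\<lambda>_::'i. M)) M (\<lambda>x. x i))"
    using assms by (intro PiM_cong refl distr_PiM_component[symmetric]) auto
  finally show ?thesis by (subst indep_vars_iff_distr_eq_PiM) auto
qed

lemma indep_vars_PiM_rows:
  assumes "prob_space M"
  shows "prob_space.indep_vars (PiM UNIV (\<lambda>_::'i \<times> 'j. M)) (\<lambda>n. PiM ({n} \<times> UNIV) (\<lambda>_. M))
           (\<lambda>n x. restrict x ({n} \<times> UNIV)) UNIV"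
proof -
  interpret prob_space "PiM UNIV (\<lambda>_::'i \<times> 'j. M)" using assms by (intro prob_space_PiM) auto
  have "indep_vars (\<lambda>n. PiM ({n} \<times> UNIV) (\<lambda>_. M)) (\<lambda>n x. restrict (\<lambda>i. x i) ({n} \<times> UNIV)) UNIV"
    by (rule indep_vars_restrict[OF indep_vars_PiM_coordinates[OF assms]])
      (auto simp: disjoint_family_on_def)
  then show ?thesis by simp
qed

lemma (in finite_measure) AE_mem_iff_if_AE_subset_measure_eq:
  assumes sets: "A \<in> sets M" "B \<in> sets M"
    and subset: "AE x in M. x \<in> A \<longrightarrow> x \<in> B" and eq: "measure M A = measure M B"
  shows "AE x in M. x \<in> A \<longleftrightarrow> x \<in> B"
proof -
  have "measure M (A \<inter> B) = measure M A"
    using subset sets by (intro measure_eq_AE) auto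
  then have "measure M (B - A) = 0"
    using finite_measure_Diff'[OF sets(2,1)] eq by (simp add: Int_commute)
  then have "AE x in M. x \<notin> B - A"
    using sets by (intro AE_not_in) (auto simp: null_sets_def emeasure_eq_measure)
  with subset show ?thesis by eventually_elim auto
qed

lemma (in prob_space) limsup_in_tail_events:
  fixes E :: "nat \<Rightarrow> 'a set"
  assumes F: "\<And>n. F n \<subseteq> Pow (space M)"
    and E: "\<And>m k. m \<le> k \<Longrightarrow> E k \<in> sigma_sets (space M) (\<Union>(F ` {m..}))"
  shows "(\<Inter>m. \<Union>k\<in>{m..}. E k) \<in> tail_events F"
  unfolding tail_events_def
proof
  fix j
  have "(\<Inter>m. \<Union>k\<in>{m..}. E k) = (\<Inter>i. \<Union>l. E (l + i + j))"
  proof (intro equalityI subsetI)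
    fix x assume x: "x \<in> (\<Inter>m. \<Union>k\<in>{m..}. E k)"
    show "x \<in> (\<Inter>i. \<Union>l. E (l + i + j))"
    proof
      fix i
      obtain k where "i + j \<le> k" "x \<in> E k" using x by blast
      then have "x \<in> E ((k - (i + j)) + i + j)" by simp
      then show "x \<in> (\<Union>l. E (l + i + j))" by blast
    qed
  next
    fix x assume x: "x \<in> (\<Inter>i. \<Union>l. E (l + i + j))"
    show "x \<in> (\<Inter>m. \<Union>k\<in>{m..}. E k)"
    proof
      fix m
      obtain l where "x \<in> E (l + m + j)" using x by blast
      then show "x \<in> (\<Union>k\<in>{m..}. E k)" by (intro UN_I[of "l + m + j"]) auto
    qed
  qed
  also have "\<dots> \<in> sigma_sets (space M) (\<Union>(F ` {j..}))"
    using F by (intro sigma_sets_Inter sigma_sets.Union E) auto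
  finally show "(\<Inter>m. \<Union>k\<in>{m..}. E k) \<in> sigma_sets (space M) (\<Union>(F ` {j..}))" .
qed

section \<open>Integrals of tail powers\<close>

definition clamp01 :: "real \<Rightarrow> real" where
  "clamp01 y = max 0 (min y 1)"

lemma borel_measurable_clamp01 [measurable]:
  "f \<in> borel_measurable M \<Longrightarrow> (\<lambda>x. clamp01 (f x)) \<in> borel_measurable M"
  unfolding clamp01_def by (intro borel_measurable_max borel_measurable_min) auto

lemma nn_integral_indicator_unit_interval_lessThan:
  "(\<integral>\<^sup>+t. indicator {0..1} t * indicator {..<y} t \<partial>lborel) = ennreal (clamp01 y)"
proof -
  have "(\<integral>\<^sup>+t. indicator {0..1} t * indicator {..<y} t \<partial>lborel) = emeasure lborel ({0..1} \<inter> {..<y})"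
    by (simp add: indicator_inter_arith[symmetric])
  also have "\<dots> = ennreal (clamp01 y)"
  proof -
    consider "y \<le> 0" | "0 < y" "y \<le> 1" | "1 < y" by linarith
    then show ?thesis
    proof cases
      case 1
      then have "{0..1} \<inter> {..<y} = {}" by auto
      with 1 show ?thesis by (simp add: clamp01_def)
    next
      case 2
      then have "{0..1} \<inter> {..<y} = {0..<y}" by auto
      with 2 show ?thesis by (simp add: clamp01_def)
    next
      case 3
      then have "{0..1} \<inter> {..<y} = {0..1}" by auto
      with 3 show ?thesis by (simp add: clamp01_def)
    qed
  qed
  finally show ?thesis .
qed

definition tail_integral :: "real measure \<Rightarrow> nat \<Rightarrow> real" where
  "tail_integral W k = (LBINT t:{0..1}. measure W {t<..} ^ k)"

lemma borel_measurable_tail_power: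
  fixes W :: "real measure"
  assumes "prob_space W" "sets W = sets borel"
  shows "(\<lambda>t. measure W {t<..} ^ k) \<in> borel_measurable borel"
proof -
  interpret prob_space W by fact
  have "mono (\<lambda>t. - measure W {t<..})"
    using assms(2) by (intro monoI) (simp add: finite_measure_mono)
  then have "(\<lambda>t. - (- measure W {t<..})) \<in> borel_measurable borel"
    by (intro borel_measurable_uminus borel_measurable_mono)
  then show ?thesis by (intro borel_measurable_power) simp
qed

lemma tail_integral_eq_nn_integral:
  fixes W :: "real measure"
  assumes W: "prob_space W" "sets W = sets borel"
  shows "ennreal (tail_integral W k) = (\<integral>\<^sup>+t. indicator {0..1} t * ennreal (measure W {t<..} ^ k) \<partial>lborel)"
proof -
  interpret prob_space W by fact
  have [measurable]: "(\<lambda>t. measure W {t<..} ^ k) \<in> borel_measurable borel"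
    using borel_measurable_tail_power[OF W] .
  have "integrable lborel (\<lambda>t. indicator {0..1} t *\<^sub>R measure W {t<..} ^ k)"
    by (rule integrableI_bounded_set[where A="{0..1}" and B=1])
       (auto simp: indicator_def intro!: power_le_one)
  then have "(\<integral>\<^sup>+t. ennreal (indicator {0..1} t *\<^sub>R measure W {t<..} ^ k) \<partial>lborel)
      = ennreal (tail_integral W k)"
    unfolding tail_integral_def set_lebesgue_integral_def
    by (intro nn_integral_eq_integral) auto
  then show ?thesis
    by (simp add: indicator_mult_ennreal mult.commute)
qed

lemma tail_integral_nonneg: "0 \<le> tail_integral W k"
  unfolding tail_integral_def set_lebesgue_integral_def
  by (intro integral_nonneg_AE) (auto simp: indicator_def)

lemma antimono_tail_integral:
  fixes W :: "real measure"
  assumes W: "prob_space W" "sets W = sets borel"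
  shows "antimono (tail_integral W)"
proof (rule antimonoI)
  interpret prob_space W by fact
  fix k m :: nat assume "k \<le> m"
  then have "ennreal (tail_integral W m) \<le> ennreal (tail_integral W k)"
    unfolding tail_integral_eq_nn_integral[OF W]
    by (intro nn_integral_mono) (auto simp: indicator_def intro!: power_decreasing)
  then show "tail_integral W m \<le> tail_integral W k" using tail_integral_nonneg by simp
qed

lemma power_tail_le_tail_integral:
  fixes W :: "real measure"
  assumes W: "prob_space W" "sets W = sets borel"
  shows "measure W {1<..} ^ k \<le> tail_integral W k"
proof -
  interpret prob_space W by fact
  have "ennreal (measure W {1<..} ^ k) = (\<integral>\<^sup>+t. indicator {0..1::real} t * ennreal (measure W {1<..} ^ k) \<partial>lborel)"
    by (subst mult.commute, subst nn_integral_cmult_indicator) (auto intro: borel_closed)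
  also have "\<dots> \<le> (\<integral>\<^sup>+t. indicator {0..1} t * ennreal (measure W {t<..} ^ k) \<partial>lborel)"
  proof (intro nn_integral_mono)
    fix t :: real
    have "t \<le> 1 \<Longrightarrow> measure W {1<..} \<le> measure W {t<..}"
      using W(2) by (intro finite_measure_mono) auto
    then show "indicator {0..1} t * ennreal (measure W {1<..} ^ k)
        \<le> indicator {0..1} t * ennreal (measure W {t<..} ^ k)"
      by (auto simp: indicator_def intro!: ennreal_leI power_mono)
  qed
  also have "\<dots> = ennreal (tail_integral W k)"
    using tail_integral_eq_nn_integral[OF W] by simp
  finally show ?thesis using tail_integral_nonneg by simp
qed

section \<open>Minimal weights for fixed generation sizes\<close>

abbreviation weight_space :: "real measure \<Rightarrow> (nat \<times> nat \<Rightarrow> real) measure" where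
  "weight_space W \<equiv> PiM UNIV (\<lambda>_. W)"

definition min_weight :: "(nat \<Rightarrow> nat) \<Rightarrow> (nat \<times> nat \<Rightarrow> real) \<Rightarrow> nat \<Rightarrow> real" where
  "min_weight z w n = Min ((\<lambda>k. w (n, k)) ` {..<z n})"

lemma less_min_weight_iff:
  assumes "1 \<le> z n"
  shows "t < min_weight z w n \<longleftrightarrow> (\<forall>k<z n. t < w (n, k))"
proof -
  have "(\<lambda>k. w (n, k)) ` {..<z n} \<noteq> {}" using assms by (auto simp: lessThan_empty_iff)
  then show ?thesis unfolding min_weight_def by (subst Min_gr_iff) auto
qed

lemma min_weight_nonneg:
  assumes "\<forall>i. 0 \<le> w i" and "1 \<le> z n"
  shows "0 \<le> min_weight z w n"
proof -
  have "(\<lambda>k. w (n, k)) ` {..<z n} \<noteq> {}" using assms(2) by (auto simp: lessThan_empty_iff)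
  then show ?thesis unfolding min_weight_def using assms(1) by (subst Min_ge_iff) auto
qed

lemma borel_measurable_min_weight:
  assumes "sets W = sets borel"
  shows "(\<lambda>w. min_weight z w n) \<in> borel_measurable (weight_space W)"
  unfolding min_weight_def using borel_measurable_coordinate[OF assms]
  by (intro borel_measurable_Min) auto

lemma emeasure_less_min_weight:
  assumes W: "prob_space W" "sets W = sets borel" and z: "1 \<le> z n"
  shows "emeasure (weight_space W) {w \<in> space (weight_space W). t < min_weight z w n}
       = ennreal (measure W {t<..} ^ z n)"
proof -
  let ?J = "(\<lambda>k. (n, k)) ` {..<z n}"
  have "space W = UNIV" using W(2) sets_eq_imp_space_eq by force
  then have "{w \<in> space (weight_space W). t < min_weight z w n}
        = prod_emb UNIV (\<lambda>_. W) ?J (Pi\<^sub>E ?J (\<lambda>_. {t<..}))"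
    using z by (auto simp: less_min_weight_iff prod_emb_def PiE_iff space_PiM)
  then have "emeasure (weight_space W) {w \<in> space (weight_space W). t < min_weight z w n}
       = (\<Prod>i\<in>?J. emeasure W {t<..})"
    using W by (simp add: emeasure_PiM_emb prob_space_imp_subprob_space)
  also have "\<dots> = emeasure W {t<..} ^ z n" by (simp add: card_image inj_on_def)
  finally show ?thesis
    using W(1) by (simp add: prob_space_def finite_measure.emeasure_eq_measure ennreal_power)
qed

lemma nn_integral_clamp01_min_weight:
  fixes W :: "real measure"
  assumes W: "prob_space W" "sets W = sets borel" and z: "1 \<le> z n"
  shows "(\<integral>\<^sup>+w. ennreal (clamp01 (min_weight z w n)) \<partial>weight_space W) = ennreal (tail_integral W (z n))"
proof -
  let ?M = "weight_space W"
  interpret prob_space ?M using W(1) by (intro prob_space_PiM) auto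
  interpret pair_sigma_finite ?M lborel by unfold_locales
  have [measurable]: "(\<lambda>w. min_weight z w n) \<in> borel_measurable ?M"
    using borel_measurable_min_weight[OF W(2)] .
  have "(\<integral>\<^sup>+w. ennreal (clamp01 (min_weight z w n)) \<partial>?M)
      = (\<integral>\<^sup>+w. (\<integral>\<^sup>+t. indicator {0..1} t * indicator {..<min_weight z w n} t \<partial>lborel) \<partial>?M)"
    by (simp add: nn_integral_indicator_unit_interval_lessThan)
  also have "\<dots> = (\<integral>\<^sup>+t. (\<integral>\<^sup>+w. indicator {0..1} t * indicator {..<min_weight z w n} t \<partial>?M) \<partial>lborel)"
    by (intro Fubini'[symmetric]) (unfold indicator_def lessThan_iff, measurable)
  also have "\<dots> = (\<integral>\<^sup>+t. indicator {0..1} t * emeasure ?M {w \<in> space ?M. t < min_weight z w n} \<partial>lborel)"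
  proof (intro nn_integral_cong)
    fix t :: real
    have "(\<integral>\<^sup>+w. indicator {0..1} t * indicator {..<min_weight z w n} t \<partial>?M)
        = (\<integral>\<^sup>+w. indicator {0..1} t * indicator {w \<in> space ?M. t < min_weight z w n} w \<partial>?M)"
      by (intro nn_integral_cong) (auto simp: indicator_def)
    then show "(\<integral>\<^sup>+w. indicator {0..1} t * indicator {..<min_weight z w n} t \<partial>?M)
        = indicator {0..1} t * emeasure ?M {w \<in> space ?M. t < min_weight z w n}"
      by (simp add: nn_integral_cmult_indicator)
  qed
  also have "\<dots> = ennreal (tail_integral W (z n))"
    using z by (simp add: emeasure_less_min_weight[OF W] tail_integral_eq_nn_integral[OF W])
  finally show ?thesis .
qed

lemma AE_summable_min_weight:
  fixes W :: "real measure"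
  assumes W: "prob_space W" "sets W = sets borel" and nonneg: "AE x in W. 0 \<le> x"
    and z: "\<And>n. 1 \<le> z n" and summable: "summable (\<lambda>n. tail_integral W (z n))"
  shows "AE w in weight_space W. summable (\<lambda>n. min_weight z w n)"
proof -
  let ?M = "weight_space W"
  have [measurable]: "(\<lambda>w. min_weight z w n) \<in> borel_measurable ?M" for n
    using borel_measurable_min_weight[OF W(2)] .
  have "(\<integral>\<^sup>+w. (\<Sum>n. ennreal (clamp01 (min_weight z w n))) \<partial>?M)
      = (\<Sum>n. ennreal (tail_integral W (z n)))"
    using z by (subst nn_integral_suminf) (simp_all add: nn_integral_clamp01_min_weight[OF W])
  also have "\<dots> \<noteq> \<infinity>"
    using ennreal_suminf_neq_top[OF summable tail_integral_nonneg] by simp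
  finally have "AE w in ?M. (\<Sum>n. ennreal (clamp01 (min_weight z w n))) \<noteq> \<infinity>"
    by (intro nn_integral_PInf_AE) measurable
  then show ?thesis using AE_PiM_nonneg[OF W(1) nonneg]
  proof eventually_elim
    case (elim w)
    have clamped: "summable (\<lambda>n. clamp01 (min_weight z w n))"
      by (rule summable_suminf_not_top) (use elim in \<open>auto simp: clamp01_def\<close>)
    then have "eventually (\<lambda>n. clamp01 (min_weight z w n) < 1) sequentially"
      by (intro order_tendstoD(2)[OF summable_LIMSEQ_zero zero_less_one])
    then have "eventually (\<lambda>n. clamp01 (min_weight z w n) = min_weight z w n) sequentially"
      by eventually_elim
        (use min_weight_nonneg[of w z] elim z in \<open>auto simp: clamp01_def\<close>)
    with clamped show ?case using summable_cong by fastforce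
  qed
qed

lemma indep_vars_min_weight:
  fixes W :: "real measure"
  assumes W: "prob_space W" "sets W = sets borel"
  shows "prob_space.indep_vars (weight_space W) (\<lambda>_. borel) (\<lambda>n w. min_weight z w n) UNIV"
proof -
  interpret prob_space "weight_space W" using W(1) by (intro prob_space_PiM) auto
  have "(\<lambda>x. min_weight z x n) \<in> borel_measurable (PiM ({n} \<times> UNIV) (\<lambda>_. W))" for n
  proof -
    have "(\<lambda>x. x (n, k)) \<in> borel_measurable (PiM ({n} \<times> UNIV) (\<lambda>_. W))" for k
      using measurable_component_singleton[of "(n, k)" "{n} \<times> UNIV" "\<lambda>_. W"] W(2)
      by (simp cong: measurable_cong_sets)
    then show ?thesis unfolding min_weight_def by (intro borel_measurable_Min) auto
  qed
  then have "indep_vars (\<lambda>_. borel) (\<lambda>n w. min_weight z (restrict w ({n} \<times> UNIV)) n) UNIV"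
    by (intro indep_vars_compose2[OF indep_vars_PiM_rows[OF W(1)]])
  then show ?thesis by (simp add: min_weight_def)
qed

lemma nn_integral_exp_neg_clamp01_min_weight_le:
  fixes W :: "real measure"
  defines "c \<equiv> 1 - exp (-1)"
  assumes W: "prob_space W" "sets W = sets borel" and z: "1 \<le> z n"
  shows "(\<integral>\<^sup>+w. ennreal (exp (- clamp01 (min_weight z w n))) \<partial>weight_space W)
     \<le> ennreal (exp (- c * tail_integral W (z n)))"
proof -
  let ?M = "weight_space W"
  let ?Y = "\<lambda>w. clamp01 (min_weight z w n)"
  interpret prob_space ?M using W(1) by (intro prob_space_PiM) auto
  have [measurable]: "(\<lambda>w. min_weight z w n) \<in> borel_measurable ?M"
    using borel_measurable_min_weight[OF W(2)] .
  have Y: "0 \<le> ?Y w" "?Y w \<le> 1" for w by (auto simp: clamp01_def)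
  have c: "0 \<le> c" "c \<le> 1" by (auto simp: c_def)
  have int_Y: "integrable ?M ?Y"
    by (rule integrable_const_bound[where B=1]) (use Y in auto)
  have "ennreal (integral\<^sup>L ?M ?Y) = ennreal (tail_integral W (z n))"
    using nn_integral_clamp01_min_weight[OF W, of z n] z nn_integral_eq_integral[OF int_Y] Y by simp
  then have E_Y: "integral\<^sup>L ?M ?Y = tail_integral W (z n)"
    using Y tail_integral_nonneg by (subst (asm) ennreal_inj) (auto intro: integral_nonneg)
  have "(\<integral>\<^sup>+w. ennreal (exp (- ?Y w)) \<partial>?M) \<le> (\<integral>\<^sup>+w. ennreal (1 - c * ?Y w) \<partial>?M)"
    unfolding c_def by (intro nn_integral_mono ennreal_leI exp_neg_le_chord Y)
  also have "\<dots> = ennreal (integral\<^sup>L ?M (\<lambda>w. 1 - c * ?Y w))"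
    using int_Y Y c by (intro nn_integral_eq_integral) (auto intro!: mult_le_one)
  also have "integral\<^sup>L ?M (\<lambda>w. 1 - c * ?Y w) = 1 - c * tail_integral W (z n)"
    using int_Y E_Y by (simp add: prob_space)
  also have "1 - c * tail_integral W (z n) \<le> exp (- c * tail_integral W (z n))"
    using exp_ge_add_one_self[of "- c * tail_integral W (z n)"] by simp
  finally show ?thesis by (simp add: ennreal_leI)
qed

lemma emeasure_partial_sum_clamp01_min_weight_le:
  fixes W :: "real measure"
  defines "c \<equiv> 1 - exp (-1)"
  assumes W: "prob_space W" "sets W = sets borel" and z: "\<And>n. 1 \<le> z n"
  shows "emeasure (weight_space W) {w \<in> space (weight_space W). (\<Sum>n<N. clamp01 (min_weight z w n)) \<le> L}
     \<le> ennreal (exp (L - c * (\<Sum>n<N. tail_integral W (z n))))"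
proof -
  let ?M = "weight_space W"
  let ?Y = "\<lambda>w n. clamp01 (min_weight z w n)"
  let ?B = "{w \<in> space ?M. (\<Sum>n<N. ?Y w n) \<le> L}"
  interpret prob_space ?M using W(1) by (intro prob_space_PiM) auto
  have [measurable]: "(\<lambda>w. min_weight z w n) \<in> borel_measurable ?M" for n
    using borel_measurable_min_weight[OF W(2)] .
  have exp_Y: "(\<Prod>n<N. ennreal (exp (- ?Y w n))) = ennreal (exp (- (\<Sum>n<N. ?Y w n)))" for w
    by (simp add: prod_ennreal exp_sum[symmetric] sum_negf)
  have "emeasure ?M ?B = (\<integral>\<^sup>+w. indicator ?B w \<partial>?M)" by simp
  also have "\<dots> \<le> (\<integral>\<^sup>+w. ennreal (exp L) * (\<Prod>n<N. ennreal (exp (- ?Y w n))) \<partial>?M)"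
    by (intro nn_integral_mono)
      (auto simp: indicator_def exp_Y ennreal_mult[symmetric] exp_add[symmetric] intro!: ennreal_leI)
  also have "\<dots> = ennreal (exp L) * (\<Prod>n<N. \<integral>\<^sup>+w. ennreal (exp (- ?Y w n)) \<partial>?M)"
  proof -
    have "indep_vars (\<lambda>_. borel) (\<lambda>n w. ennreal (exp (- ?Y w n))) UNIV"
      by (rule indep_vars_compose2[OF indep_vars_min_weight[OF W]]) measurable
    then have "(\<integral>\<^sup>+w. (\<Prod>n<N. ennreal (exp (- ?Y w n))) \<partial>?M)
        = (\<Prod>n<N. \<integral>\<^sup>+w. ennreal (exp (- ?Y w n)) \<partial>?M)"
      by (intro indep_vars_nn_integral) (auto elim: indep_vars_subset)
    then show ?thesis by (simp add: nn_integral_cmult)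
  qed
  also have "\<dots> \<le> ennreal (exp L) * (\<Prod>n<N. ennreal (exp (- c * tail_integral W (z n))))"
    unfolding c_def
    by (intro mult_left_mono prod_mono_ennreal nn_integral_exp_neg_clamp01_min_weight_le[OF W, of z, OF z]) auto
  also have "\<dots> = ennreal (exp (L - c * (\<Sum>n<N. tail_integral W (z n))))"
    by (simp add: prod_ennreal ennreal_mult[symmetric] exp_sum[symmetric] sum_distrib_left
        sum_negf[symmetric] exp_add[symmetric])
  finally show ?thesis .
qed

lemma bounded_partial_sums_clamp01_min_weight_null:
  fixes W :: "real measure"
  assumes W: "prob_space W" "sets W = sets borel" and z: "\<And>n. 1 \<le> z n"
    and not_summable: "\<not> summable (\<lambda>n. tail_integral W (z n))"
  shows "{w \<in> space (weight_space W). \<forall>N. (\<Sum>n<N. clamp01 (min_weight z w n)) \<le> L}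
     \<in> null_sets (weight_space W)"
proof -
  let ?M = "weight_space W"
  let ?B = "{w \<in> space ?M. \<forall>N. (\<Sum>n<N. clamp01 (min_weight z w n)) \<le> L}"
  define c where "c = 1 - exp (-1::real)"
  interpret prob_space ?M using W(1) by (intro prob_space_PiM) auto
  have [measurable]: "(\<lambda>w. min_weight z w n) \<in> borel_measurable ?M" for n
    using borel_measurable_min_weight[OF W(2)] .
  have B: "?B \<in> sets ?M" by measurable
  have le_exp: "measure ?M ?B \<le> exp (L - c * (\<Sum>n<N. tail_integral W (z n)))" for N
  proof -
    have "emeasure ?M ?B
        \<le> emeasure ?M {w \<in> space ?M. (\<Sum>n<N. clamp01 (min_weight z w n)) \<le> L}"
      by (intro emeasure_mono) auto
    also have "\<dots> \<le> ennreal (exp (L - c * (\<Sum>n<N. tail_integral W (z n))))"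
      unfolding c_def by (rule emeasure_partial_sum_clamp01_min_weight_le[OF W z])
    finally show ?thesis by (simp add: emeasure_eq_measure)
  qed
  have "\<not> 0 < measure ?M ?B"
  proof
    assume pos: "0 < measure ?M ?B"
    have "0 < c" by (simp add: c_def)
    obtain N where "(L - ln (measure ?M ?B)) / c < (\<Sum>n<N. tail_integral W (z n))"
      using nonneg_not_summable_unbounded[OF tail_integral_nonneg not_summable] .
    then have "L - ln (measure ?M ?B) < (\<Sum>n<N. tail_integral W (z n)) * c"
      using \<open>0 < c\<close> by (simp only: pos_divide_less_eq)
    then have "L - c * (\<Sum>n<N. tail_integral W (z n)) < ln (measure ?M ?B)"
      by (simp only: mult.commute[of _ c])
    then have "exp (L - c * (\<Sum>n<N. tail_integral W (z n))) < exp (ln (measure ?M ?B))"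
      by (simp only: exp_less_cancel_iff)
    then have "exp (L - c * (\<Sum>n<N. tail_integral W (z n))) < measure ?M ?B"
      by (simp only: exp_ln[OF pos])
    with le_exp[of N] show False by simp
  qed
  then have "measure ?M ?B = 0" using measure_nonneg[of ?M ?B] by linarith
  then show ?thesis
    using B by (simp add: null_sets_def emeasure_eq_measure)
qed

lemma AE_not_summable_min_weight:
  fixes W :: "real measure"
  assumes W: "prob_space W" "sets W = sets borel" and nonneg: "AE x in W. 0 \<le> x"
    and z: "\<And>n. 1 \<le> z n" and not_summable: "\<not> summable (\<lambda>n. tail_integral W (z n))"
  shows "AE w in weight_space W. \<not> summable (\<lambda>n. min_weight z w n)"
proof -
  let ?M = "weight_space W"
  have "AE w in ?M. \<forall>L::nat. \<not> (\<forall>N. (\<Sum>n<N. clamp01 (min_weight z w n)) \<le> L)"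
    unfolding AE_all_countable
    using AE_not_in[OF bounded_partial_sums_clamp01_min_weight_null[OF W z not_summable]]
    by (auto elim!: AE_mp)
  then show ?thesis using AE_PiM_nonneg[OF W(1) nonneg]
  proof eventually_elim
    case (elim w)
    show "\<not> summable (\<lambda>n. min_weight z w n)"
    proof
      assume summable: "summable (\<lambda>n. min_weight z w n)"
      have nonneg: "0 \<le> min_weight z w n" for n
        using min_weight_nonneg elim(2) z by blast
      obtain L :: nat where L: "(\<Sum>n. min_weight z w n) \<le> L"
        using real_arch_simple by blast
      have "(\<Sum>n<N. clamp01 (min_weight z w n)) \<le> L" for N
      proof -
        have "(\<Sum>n<N. clamp01 (min_weight z w n)) \<le> (\<Sum>n<N. min_weight z w n)"
          using nonneg by (intro sum_mono) (simp add: clamp01_def)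
        also have "\<dots> \<le> (\<Sum>n. min_weight z w n)"
          using summable nonneg by (intro sum_le_suminf) auto
        finally show ?thesis using L by linarith
      qed
      with elim(1) show False by blast
    qed
  qed
qed

lemma emeasure_summable_min_weight:
  fixes W :: "real measure"
  assumes W: "prob_space W" "sets W = sets borel" and nonneg: "AE x in W. 0 \<le> x"
    and z: "\<And>n. 1 \<le> z n"
  shows "emeasure (weight_space W) {w \<in> space (weight_space W). summable (\<lambda>n. min_weight z w n)}
     = (if summable (\<lambda>n. tail_integral W (z n)) then 1 else 0)"
proof -
  let ?M = "weight_space W"
  let ?S = "{w \<in> space ?M. summable (\<lambda>n. min_weight z w n)}"
  interpret prob_space ?M using W(1) by (intro prob_space_PiM) auto
  have [measurable]: "(\<lambda>w. min_weight z w n) \<in> borel_measurable ?M" for n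
    using borel_measurable_min_weight[OF W(2)] .
  have S: "?S \<in> sets ?M" by measurable
  show ?thesis
  proof (cases "summable (\<lambda>n. tail_integral W (z n))")
    case True
    then have "emeasure ?M ?S = emeasure ?M (space ?M)"
      using AE_summable_min_weight[OF W nonneg z] S by (intro emeasure_eq_AE) auto
    with True show ?thesis by (simp add: emeasure_space_1)
  next
    case False
    then have "emeasure ?M ?S = emeasure ?M {}"
      using AE_not_summable_min_weight[OF W nonneg z] S by (intro emeasure_eq_AE) auto
    with False show ?thesis by simp
  qed
qed

section \<open>A zero-one law for the generation sizes\<close>

abbreviation offspring_space :: "nat pmf \<Rightarrow> (nat \<times> nat \<Rightarrow> nat) measure" where
  "offspring_space p \<equiv> PiM UNIV (\<lambda>_. measure_pmf p)"

lemma measurable_gw_gen [measurable]: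
  "(\<lambda>x. gw_gen x n) \<in> measurable (offspring_space p) (count_space UNIV)"
proof (induction n)
  case (Suc n)
  have coordinate: "(\<lambda>x. x i) \<in> measurable (offspring_space p) (count_space UNIV)" for i
    using measurable_component_singleton[of i UNIV "\<lambda>_. measure_pmf p"]
    by (simp cong: measurable_cong_sets)
  have "(\<lambda>x. \<Sum>i<m. x (n, i)) \<in> measurable (offspring_space p) (count_space UNIV)" for m
    by (induction m) (simp_all add: coordinate)
  then show ?case
    using measurable_compose_countable[OF _ Suc, of "\<lambda>m x. \<Sum>i<m. x (n, i)"] by simp
qed simp

lemma AE_offspring_ge_1:
  assumes "pmf p 0 = 0"
  shows "AE x in offspring_space p. \<forall>i. 1 \<le> x i"
proof -
  have "AE y in measure_pmf p. 1 \<le> y"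
    using assms by (auto simp: AE_measure_pmf_iff set_pmf_iff Suc_le_eq intro: gr0I)
  then show ?thesis
    unfolding AE_all_countable by (auto intro!: AE_PiM_component measure_pmf.prob_space_axioms)
qed

lemma gw_gen_ge_1:
  assumes "\<forall>i. 1 \<le> x i"
  shows "1 \<le> gw_gen x n"
proof (induction n)
  case (Suc n)
  then have "x (n, 0) \<le> (\<Sum>i<gw_gen x n. x (n, i))" by (intro member_le_sum) auto
  with assms show ?case by (metis gw_gen.simps(2) order_trans)
qed simp

text \<open>The offspring numbers from generation k on; gw_gen (row_shift k x) is again a
  Galton--Watson process, started from one individual of generation k.\<close>

definition row_shift :: "nat \<Rightarrow> (nat \<times> 'i \<Rightarrow> 'a) \<Rightarrow> nat \<times> 'i \<Rightarrow> 'a" where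
  "row_shift k x = (\<lambda>(n, i). x (n + k, i))"

definition row_events :: "'a measure \<Rightarrow> nat \<Rightarrow> (nat \<times> 'i \<Rightarrow> 'a) set set" where
  "row_events M n = sigma_sets (space (PiM UNIV (\<lambda>_. M)))
     {(\<lambda>x. restrict x ({n} \<times> UNIV)) -` B \<inter> space (PiM UNIV (\<lambda>_. M)) | B.
        B \<in> sets (PiM ({n} \<times> UNIV) (\<lambda>_. M))}"

lemma gw_gen_row_shift_le:
  assumes "\<forall>i. 1 \<le> x i"
  shows "gw_gen (row_shift k x) n \<le> gw_gen x (n + k)"
proof (induction n)
  case 0
  then show ?case using gw_gen_ge_1[OF assms] by simp
next
  case (Suc n)
  have "gw_gen (row_shift k x) (Suc n) = (\<Sum>i<gw_gen (row_shift k x) n. x (n + k, i))"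
    by (simp add: row_shift_def)
  also have "\<dots> \<le> (\<Sum>i<gw_gen x (n + k). x (n + k, i))"
    using Suc by (intro sum_mono2) auto
  finally show ?case by simp
qed

lemma distr_row_shift:
  assumes "prob_space M"
  shows "distr (PiM UNIV (\<lambda>_. M)) (PiM UNIV (\<lambda>_. M)) (row_shift k) = PiM UNIV (\<lambda>_::nat \<times> 'i. M)"
proof -
  have shift: "row_shift k = (\<lambda>x. \<lambda>j\<in>UNIV. x (case j of (n, i::'i) \<Rightarrow> (n + k, i)))"
    by (auto simp: row_shift_def fun_eq_iff)
  have "inj (\<lambda>(n, i::'i). (n + k, i))" by (auto simp: inj_on_def)
  then show ?thesis
    unfolding shift using assms by (intro distr_PiM_reindex) auto
qed

lemma measurable_row_shift:
  "row_shift k \<in> measurable (PiM UNIV (\<lambda>_. M)) (PiM UNIV (\<lambda>_::nat \<times> 'i. M))"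
  unfolding row_shift_def by (rule measurable_PiM_single') (auto simp: space_PiM split: prod.split)

lemma sigma_algebra_row_events: "sigma_algebra (space (PiM UNIV (\<lambda>_. M))) (row_events M n)"
  unfolding row_events_def by (rule sigma_algebra_sigma_sets) auto

lemma indep_sets_row_events:
  assumes "prob_space M"
  shows "prob_space.indep_sets (PiM UNIV (\<lambda>_. M)) (row_events M) UNIV"
  using indep_vars_PiM_rows[OF assms]
  unfolding prob_space.indep_vars_def[OF prob_space_PiM[OF assms]] row_events_def by blast

lemma measurable_row_shift_later_rows:
  assumes "m \<le> k"
  shows "row_shift k \<in> measurable
    (sigma (space (PiM UNIV (\<lambda>_. M))) (\<Union>(row_events M ` {m..}))) (PiM UNIV (\<lambda>_::nat \<times> 'i. M))"
proof -
  let ?S = "space (PiM UNIV (\<lambda>_::nat \<times> 'i. M))"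
  let ?G = "\<Union>(row_events M ` {m..})"
  have G: "?G \<subseteq> Pow ?S"
    using sigma_algebra_row_events unfolding sigma_algebra_iff2 by blast
  show ?thesis
  proof (rule measurable_PiM_single)
    show "row_shift k \<in> space (sigma ?S ?G) \<rightarrow> (\<Pi>\<^sub>E i\<in>UNIV. space M)"
      using G by (auto simp: space_PiM row_shift_def split: prod.split)
  next
    fix B and j :: "nat \<times> 'i"
    assume B: "B \<in> sets M"
    obtain n i where j: "j = (n, i)" by (cases j)
    let ?row = "PiM ({n + k} \<times> UNIV) (\<lambda>_. M)"
    have "(\<lambda>x. x (n + k, i)) -` B \<inter> space ?row \<in> sets ?row"
      using B by (intro measurable_sets[OF _ B]) simp
    then have "(\<lambda>x. restrict x ({n + k} \<times> UNIV)) -` ((\<lambda>x. x (n + k, i)) -` B \<inter> space ?row) \<inter> ?S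
        \<in> row_events M (n + k)"
      unfolding row_events_def by (blast intro: sigma_sets.Basic)
    moreover have "(\<lambda>x. restrict x ({n + k} \<times> UNIV)) -` ((\<lambda>x. x (n + k, i)) -` B \<inter> space ?row) \<inter> ?S
        = {x \<in> space (sigma ?S ?G). row_shift k x j \<in> B}"
      using G by (auto simp: j row_shift_def space_PiM PiE_iff)
    ultimately have "{x \<in> space (sigma ?S ?G). row_shift k x j \<in> B} \<in> ?G"
      using assms G by auto
    then show "{x \<in> space (sigma ?S ?G). row_shift k x j \<in> B} \<in> sets (sigma ?S ?G)"
      using G by (simp add: sets_measure_of sigma_sets.Basic)
  qed
qed

lemma measure_row_shift_vimage:
  assumes "prob_space M" and A: "A \<in> sets (PiM UNIV (\<lambda>_. M))"
  shows "measure (PiM UNIV (\<lambda>_. M)) (row_shift k -` A \<inter> space (PiM UNIV (\<lambda>_. M)))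
       = measure (PiM UNIV (\<lambda>_::nat \<times> 'i. M)) A"
proof -
  have "measure (distr (PiM UNIV (\<lambda>_. M)) (PiM UNIV (\<lambda>_. M)) (row_shift k)) A
      = measure (PiM UNIV (\<lambda>_. M)) (row_shift k -` A \<inter> space (PiM UNIV (\<lambda>_. M)))"
    by (rule measure_distr[OF measurable_row_shift A])
  then show ?thesis unfolding distr_row_shift[OF assms(1)] by simp
qed

lemma AE_summable_gw_gen_of_row_shift:
  fixes g :: "nat \<Rightarrow> real"
  assumes p: "pmf p 0 = 0" and nonneg: "\<And>k. 0 \<le> g k"
    and antimono: "antimono g"
  shows "AE x in offspring_space p.
    summable (\<lambda>n. g (gw_gen (row_shift k x) n)) \<longrightarrow> summable (\<lambda>n. g (gw_gen x n))"
  using AE_offspring_ge_1[OF p]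
proof eventually_elim
  case (elim x)
  show ?case
  proof
    assume "summable (\<lambda>n. g (gw_gen (row_shift k x) n))"
    then have "summable (\<lambda>n. g (gw_gen x (n + k)))"
      by (rule summable_comparison_test')
        (use nonneg antimonoD[OF antimono] gw_gen_row_shift_le[OF elim] in auto)
    then show "summable (\<lambda>n. g (gw_gen x n))"
      using summable_iff_shift[where f="\<lambda>n. g (gw_gen x n)"] by simp
  qed
qed

lemma measure_summable_gw_gen_zero_one:
  fixes g :: "nat \<Rightarrow> real"
  assumes p: "pmf p 0 = 0" and nonneg: "\<And>k. 0 \<le> g k"
    and antimono: "antimono g"
  shows "measure (offspring_space p) {x \<in> space (offspring_space p). summable (\<lambda>n. g (gw_gen x n))}
     \<in> {0, 1}"
proof -
  let ?M = "offspring_space p"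
  interpret prob_space ?M by (intro prob_space_PiM measure_pmf.prob_space_axioms)
  define A where "A = {x \<in> space ?M. summable (\<lambda>n. g (gw_gen x n))}"
  define E where "E k = row_shift k -` A \<inter> space ?M" for k
  have A: "A \<in> sets ?M" unfolding A_def by measurable
  have E: "E k \<in> sets ?M" for k
    unfolding E_def by (rule measurable_sets[OF measurable_row_shift A])
  have "prob (E k) = prob A" for k
    unfolding E_def by (rule measure_row_shift_vimage[OF measure_pmf.prob_space_axioms A])
  moreover have "AE x in ?M. x \<in> E k \<longrightarrow> x \<in> A" for k
    using AE_summable_gw_gen_of_row_shift[OF p nonneg antimono]
    by eventually_elim (simp add: E_def A_def space_PiM)
  ultimately have "AE x in ?M. \<forall>k. x \<in> E k \<longleftrightarrow> x \<in> A"
    unfolding AE_all_countable using AE_mem_iff_if_AE_subset_measure_eq[OF E A] by blast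
  then have limsup: "AE x in ?M. x \<in> (\<Inter>m. \<Union>k\<in>{m..}. E k) \<longleftrightarrow> x \<in> A"
    by eventually_elim (auto simp: space_PiM)
  have tail: "(\<Inter>m. \<Union>k\<in>{m..}. E k) \<in> tail_events (row_events (measure_pmf p))"
  proof (rule limsup_in_tail_events)
    show rows: "row_events (measure_pmf p) n \<subseteq> Pow (space ?M)" for n
      using sigma_algebra_row_events unfolding sigma_algebra_iff2 by blast
    show "E k \<in> sigma_sets (space ?M) (\<Union>(row_events (measure_pmf p) ` {m..}))" if "m \<le> k" for m k
      using measurable_sets[OF measurable_row_shift_later_rows[OF that] A] rows
      by (simp add: E_def sets_measure_of space_measure_of UN_subset_iff)
  qed
  have "prob (\<Inter>m. \<Union>k\<in>{m..}. E k) \<in> {0, 1}"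
    using kolmogorov_0_1_law[OF sigma_algebra_row_events
        indep_sets_row_events[OF measure_pmf.prob_space_axioms] tail] by simp
  moreover have "prob (\<Inter>m. \<Union>k\<in>{m..}. E k) = prob A"
    using limsup E A by (intro measure_eq_AE) auto
  ultimately show ?thesis by (simp add: A_def)
qed

section \<open>The weighted Galton--Watson tree\<close>

lemma gw_min_weight_eq_min_weight: "gw_min_weight \<omega> n = min_weight (gw_gen (fst \<omega>)) (snd \<omega>) n"
  by (simp add: gw_min_weight_def min_weight_def)

lemma borel_measurable_gw_min_weight:
  assumes "sets W = sets borel"
  shows "(\<lambda>\<omega>. gw_min_weight \<omega> n) \<in> borel_measurable (gw_space p W)"
proof -
  have "(\<lambda>\<omega>. Min ((\<lambda>k. snd \<omega> (n, k)) ` {..<m})) \<in> borel_measurable (gw_space p W)" for m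
    using measurable_compose[OF measurable_snd borel_measurable_min_weight[OF assms, of "\<lambda>_. m" n]]
    unfolding gw_space_def min_weight_def .
  moreover have "(\<lambda>\<omega>. gw_gen (fst \<omega>) n) \<in> measurable (gw_space p W) (count_space UNIV)"
    unfolding gw_space_def by (rule measurable_compose[OF measurable_fst measurable_gw_gen])
  ultimately show ?thesis
    unfolding gw_min_weight_def by (rule measurable_compose_countable)
qed

lemma measure_gw_space_fst:
  assumes "prob_space W" and Q: "{x \<in> space (offspring_space p). Q x} \<in> sets (offspring_space p)"
  shows "measure (gw_space p W) {\<omega> \<in> space (gw_space p W). Q (fst \<omega>)}
       = measure (offspring_space p) {x \<in> space (offspring_space p). Q x}"
proof -
  interpret weights: prob_space "weight_space W" using assms(1) by (intro prob_space_PiM) auto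
  have "{\<omega> \<in> space (gw_space p W). Q (fst \<omega>)}
      = {x \<in> space (offspring_space p). Q x} \<times> space (weight_space W)"
    by (auto simp: gw_space_def space_pair_measure)
  then have "emeasure (gw_space p W) {\<omega> \<in> space (gw_space p W). Q (fst \<omega>)}
      = emeasure (offspring_space p) {x \<in> space (offspring_space p). Q x}"
    using Q by (simp add: gw_space_def weights.emeasure_pair_measure_Times weights.emeasure_space_1)
  then show ?thesis by (simp add: measure_def)
qed

lemma measure_gw_space_summable_min_weight:
  fixes W :: "real measure"
  assumes p: "pmf p 0 = 0" and W: "prob_space W" "sets W = sets borel"
    and nonneg: "AE x in W. 0 \<le> x"
  shows "measure (gw_space p W) {\<omega> \<in> space (gw_space p W). summable (\<lambda>n. gw_min_weight \<omega> n)}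
       = measure (offspring_space p)
           {x \<in> space (offspring_space p). summable (\<lambda>n. tail_integral W (gw_gen x n))}"
proof -
  let ?S = "{\<omega> \<in> space (gw_space p W). summable (\<lambda>n. gw_min_weight \<omega> n)}"
  let ?C = "{x \<in> space (offspring_space p). summable (\<lambda>n. tail_integral W (gw_gen x n))}"
  interpret weights: prob_space "weight_space W" using W(1) by (intro prob_space_PiM) auto
  have [measurable]: "(\<lambda>\<omega>. gw_min_weight \<omega> n) \<in> borel_measurable (gw_space p W)" for n
    using borel_measurable_gw_min_weight[OF W(2)] .
  have S: "?S \<in> sets (gw_space p W)" by measurable
  have C: "?C \<in> sets (offspring_space p)" by measurable
  have "emeasure (gw_space p W) ?S = (\<integral>\<^sup>+x. emeasure (weight_space W) (Pair x -` ?S) \<partial>offspring_space p)"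
    unfolding gw_space_def using S unfolding gw_space_def by (rule weights.emeasure_pair_measure_alt)
  also have "\<dots> = (\<integral>\<^sup>+x. indicator ?C x \<partial>offspring_space p)"
  proof (intro nn_integral_cong_AE)
    show "AE x in offspring_space p. emeasure (weight_space W) (Pair x -` ?S) = indicator ?C x"
      using AE_offspring_ge_1[OF p]
    proof eventually_elim
      case (elim x)
      have "Pair x -` ?S = {w \<in> space (weight_space W). summable (\<lambda>n. min_weight (gw_gen x) w n)}"
        by (auto simp: gw_space_def space_pair_measure gw_min_weight_eq_min_weight space_PiM)
      with emeasure_summable_min_weight[OF W nonneg gw_gen_ge_1[OF elim]] show ?case
        by (simp add: indicator_def space_PiM)
    qed
  qed
  also have "\<dots> = emeasure (offspring_space p) ?C" using C by simp
  finally show ?thesis by (simp add: measure_def)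
qed

theorem proposition4p2:
  fixes p :: "nat pmf" and W :: "real measure"
  assumes "pmf p 0 = 0"
    and "prob_space W" and "sets W = sets borel"
    and "AE x in W. 0 \<le> x"
  defines "\<Omega> \<equiv> gw_space p W"
  defines "cond1 \<equiv> measure \<Omega> {\<omega> \<in> space \<Omega>.
              summable (\<lambda>n. (measure W {1<..}) ^ gw_gen (fst \<omega>) n)} = 1"
  defines "cond2 \<equiv> measure \<Omega> {\<omega> \<in> space \<Omega>.
              summable (\<lambda>n. LBINT t:{0..1}. (measure W {t<..}) ^ gw_gen (fst \<omega>) n)} = 1"
  defines "P \<equiv> measure \<Omega> {\<omega> \<in> space \<Omega>. summable (\<lambda>n. gw_min_weight \<omega> n)}"
  shows "(P = 1 \<longleftrightarrow> cond1 \<and> cond2) \<and> (\<not> (cond1 \<and> cond2) \<longrightarrow> P = 0)"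
proof -
  note p = assms(1) and W = assms(2,3) and nonneg = assms(4)
  let ?M = "offspring_space p"
  interpret prob_space ?M by (intro prob_space_PiM measure_pmf.prob_space_axioms)
  define C1 where "C1 = {x \<in> space ?M. summable (\<lambda>n. measure W {1<..} ^ gw_gen x n)}"
  define C2 where "C2 = {x \<in> space ?M. summable (\<lambda>n. tail_integral W (gw_gen x n))}"
  have C1: "C1 \<in> sets ?M" and C2: "C2 \<in> sets ?M" unfolding C1_def C2_def by measurable
  have cond1: "cond1 \<longleftrightarrow> prob C1 = 1"
    using measure_gw_space_fst[OF W(1) C1[unfolded C1_def]] by (simp add: cond1_def \<Omega>_def C1_def)
  have cond2: "cond2 \<longleftrightarrow> prob C2 = 1"
    using measure_gw_space_fst[OF W(1) C2[unfolded C2_def]]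
    by (simp add: cond2_def \<Omega>_def C2_def tail_integral_def)
  have P: "P = prob C2"
    unfolding P_def \<Omega>_def C2_def by (rule measure_gw_space_summable_min_weight[OF p W nonneg])
  have "prob C2 \<in> {0, 1}"
    unfolding C2_def using tail_integral_nonneg antimono_tail_integral[OF W]
    by (intro measure_summable_gw_gen_zero_one[OF p])
  moreover have "C2 \<subseteq> C1"
    unfolding C1_def C2_def using power_tail_le_tail_integral[OF W]
    by (auto intro: summable_comparison_test')
  then have "prob C2 \<le> prob C1" using C1 by (rule finite_measure_mono)
  then have "prob C2 = 1 \<Longrightarrow> prob C1 = 1" using prob_le_1[of C1] by linarith
  ultimately show ?thesis using cond1 cond2 P by auto
qed

end
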